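(* Let $B_1$ ($k\times k$) and $B_2$ ($l\times l$) be nonempty real symmetric matrices with all entries positive, and let $A$ be the real symmetric block matrix $$A=\begin{pmatrix}B_1&\mathbf 0_{k\times 1}&\mathbf 0_{k\times l}\\ \mathbf 0_{1\times k}&0&\mathbf 0_{1\times l}\\ \mathbf 0_{l\times k}&\mathbf 0_{l\times 1}&B_2\end{pmatrix}.$$ If $A$ has symmetric tropical rank two, then $A$ has symmetric Kapranov rank two.
   Context: Let $\tilde K$ be the field of Hahn series $\sum_{\alpha\in A}c_\alpha t^\alpha$ ($A\subset\mathbb R$ well-ordered, $c_\alpha\in\mathbb C$); for nonzero $a\in\tilde K$, $\deg(a)$ is the smallest exponent with nonzero coefficient. A symmetric lift of a real symmetric matrix $A$ is a symmetric matrix $\tilde A$ over $\tilde K$ with all entries nonzero and $\deg(\tilde a_{i,j})=A_{i,j}$; the symmetric Kapranov rank of $A$ is the minimum rank of a symmetric lift. For an $r\times r$ submatrix of $A$ with row index set $I$ and column index set $J$, each bijection $\rho:I\to J$ gives a monomial $\prod_{i\in I}X_{i,\rho(i)}$ in commuting variables subject to $X_{i,j}=X_{j,i}$, with value $\sum_{i\in I}A_{i,\rho(i)}$; the submatrix is symmetrically tropically singular if the minimum value is attained by at least two distinct monomials. The symmetric tropical rank of $A$ is the largest $r$ such that $A$ has an $r\times r$ submatrix that is not symmetrically tropically singular. *)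

theory Defs
  imports Complex_Main "HOL-Combinatorics.Permutations" "HOL-Library.Multiset"
begin

text \<open>A Hahn series sum c_a t^a is represented by its coefficient function
  real => complex; it is a Hahn series iff its support is well-ordered.\<close>

type_synonym hahn = "real \<Rightarrow> complex"

definition hsupp :: "hahn \<Rightarrow> real set" where
  "hsupp f = {a. f a \<noteq> 0}"

definition is_hahn :: "hahn \<Rightarrow> bool" where
  "is_hahn f \<longleftrightarrow> (\<forall>T. T \<subseteq> hsupp f \<longrightarrow> T \<noteq> {} \<longrightarrow> (\<exists>m\<in>T. \<forall>t\<in>T. m \<le> t))"

definition hzero :: hahn where "hzero = (\<lambda>_. 0)"

definition hone :: hahn where "hone = (\<lambda>a. if a = 0 then 1 else 0)"

definition hneg :: "hahn \<Rightarrow> hahn" where "hneg f = (\<lambda>a. - f a)"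

text \<open>Finite sums (pointwise) and the Cauchy product (the sum defining each
  coefficient is finite for Hahn series).\<close>

definition hsum :: "('i \<Rightarrow> hahn) \<Rightarrow> 'i set \<Rightarrow> hahn" where
  "hsum F S = (\<lambda>a. \<Sum>s\<in>S. F s a)"

definition hmul :: "hahn \<Rightarrow> hahn \<Rightarrow> hahn" where
  "hmul f g = (\<lambda>c. \<Sum>p\<in>{(a, b). f a \<noteq> 0 \<and> g b \<noteq> 0 \<and> a + b = c}. f (fst p) * g (snd p))"

fun hprod_list :: "hahn list \<Rightarrow> hahn" where
  "hprod_list [] = hone"
| "hprod_list (x # xs) = hmul x (hprod_list xs)"

definition hdeg :: "hahn \<Rightarrow> real" where
  "hdeg f = (LEAST a. f a \<noteq> 0)"

text \<open>Matrices are functions nat => nat => _, used on indices below n.\<close>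

definition hdet :: "nat \<Rightarrow> (nat \<Rightarrow> nat \<Rightarrow> hahn) \<Rightarrow> hahn" where
  "hdet r N = hsum (\<lambda>\<sigma>. (if evenperm \<sigma> then id else hneg)
                        (hprod_list (map (\<lambda>p. N p (\<sigma> p)) [0..<r])))
                  {\<sigma>. \<sigma> permutes {..<r}}"

definition hminor :: "(nat \<Rightarrow> nat \<Rightarrow> hahn) \<Rightarrow> nat set \<Rightarrow> nat set \<Rightarrow> hahn" where
  "hminor M I J = hdet (card I)
     (\<lambda>p q. M (sorted_list_of_set I ! p) (sorted_list_of_set J ! q))"

definition hrank :: "nat \<Rightarrow> (nat \<Rightarrow> nat \<Rightarrow> hahn) \<Rightarrow> nat" where
  "hrank n M = Max {r. \<exists>I J. I \<subseteq> {..<n} \<and> J \<subseteq> {..<n} \<and> card I = r \<and> card J = r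
                      \<and> hminor M I J \<noteq> hzero}"

definition sym_lift :: "nat \<Rightarrow> (nat \<Rightarrow> nat \<Rightarrow> real) \<Rightarrow> (nat \<Rightarrow> nat \<Rightarrow> hahn) \<Rightarrow> bool" where
  "sym_lift n A M \<longleftrightarrow>
     (\<forall>i<n. \<forall>j<n. is_hahn (M i j) \<and> M i j \<noteq> hzero \<and> M i j = M j i
                 \<and> hdeg (M i j) = A i j)"

definition sym_kapranov_rank :: "nat \<Rightarrow> (nat \<Rightarrow> nat \<Rightarrow> real) \<Rightarrow> nat" where
  "sym_kapranov_rank n A = (LEAST r. \<exists>M. sym_lift n A M \<and> hrank n M = r)"

text \<open>The monomial of a bijection rho : I -> J in commuting variables with
  X_ij = X_ji: the multiset of unordered index pairs {i, rho i}.\<close>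

definition sym_monomial :: "nat set \<Rightarrow> (nat \<Rightarrow> nat) \<Rightarrow> nat set multiset" where
  "sym_monomial I \<rho> = image_mset (\<lambda>i. {i, \<rho> i}) (mset_set I)"

definition trop_value :: "(nat \<Rightarrow> nat \<Rightarrow> real) \<Rightarrow> nat set \<Rightarrow> (nat \<Rightarrow> nat) \<Rightarrow> real" where
  "trop_value A I \<rho> = (\<Sum>i\<in>I. A i (\<rho> i))"

definition sym_trop_singular :: "(nat \<Rightarrow> nat \<Rightarrow> real) \<Rightarrow> nat set \<Rightarrow> nat set \<Rightarrow> bool" where
  "sym_trop_singular A I J \<longleftrightarrow>
     (let m = Min {trop_value A I \<rho> | \<rho>. bij_betw \<rho> I J} in
      \<exists>\<rho>1 \<rho>2. bij_betw \<rho>1 I J \<and> bij_betw \<rho>2 I J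
        \<and> trop_value A I \<rho>1 = m \<and> trop_value A I \<rho>2 = m
        \<and> sym_monomial I \<rho>1 \<noteq> sym_monomial I \<rho>2)"

definition sym_tropical_rank :: "nat \<Rightarrow> (nat \<Rightarrow> nat \<Rightarrow> real) \<Rightarrow> nat" where
  "sym_tropical_rank n A = Max {r. \<exists>I J. I \<subseteq> {..<n} \<and> J \<subseteq> {..<n} \<and> card I = r \<and> card J = r
                                 \<and> \<not> sym_trop_singular A I J}"

text \<open>diag(B1, 0, B2) of size k + 1 + l; B1 indexed by {..<k}, B2 by {..<l}.\<close>

definition block_matrix :: "nat \<Rightarrow> (nat \<Rightarrow> nat \<Rightarrow> real) \<Rightarrow> (nat \<Rightarrow> nat \<Rightarrow> real) \<Rightarrow> nat \<Rightarrow> nat \<Rightarrow> real" where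
  "block_matrix k B1 B2 i j =
     (if i < k \<and> j < k then B1 i j
      else if k < i \<and> k < j then B2 (i - k - 1) (j - k - 1)
      else 0)"

end

theory Submission
  imports Defs "Jordan_Normal_Form.Determinant" "HOL-Library.Poly_Mapping" "HOL-Library.Nat_Bijection"
begin

text \<open>
  Symmetric tropical rank two forces every 3 x 3 submatrix of A through the zero row k to be
  symmetrically tropically singular. For each diagonal block B this yields two conditions: no entry
  B a d lies strictly below B a b, B c b and B c d (where a, c and b, d are distinct), and no
  off-diagonal entry B i j lies strictly below both B i i and B j j. Under these conditions there
  are finitely supported series w i with positive exponents and deg (w i + w j) = B i j: at each
  level v the coefficients of t^v are chosen so that those of w i and w j cancel exactly when
  v < B i j. From the series w1 and w2 of the two blocks one builds a symmetric lift of the form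
  U V^T + V U^T, which has rank at most two. Conversely the minor on rows and columns 0, k of
  every lift is nonzero.
\<close>

section \<open>Finitely supported Hahn series\<close>

type_synonym hpoly = "real \<Rightarrow>\<^sub>0 complex"

abbreviation hseries :: "hpoly \<Rightarrow> hahn" where
  "hseries \<equiv> poly_mapping.lookup"

lemma is_hahn_hseries: "is_hahn (hseries p)"
proof -
  have "finite (hsupp (hseries p))" unfolding hsupp_def by (rule finite_lookup)
  then have "finite T" if "T \<subseteq> hsupp (hseries p)" for T
    using that finite_subset by blast
  then show ?thesis unfolding is_hahn_def by (metis Min_in Min_le)
qed

lemma hmul_hone: "hmul f hone = f"
proof
  fix c
  have "{(a, b). f a \<noteq> 0 \<and> hone b \<noteq> 0 \<and> a + b = c} = (if f c = 0 then {} else {(c, 0)})"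
    by (auto simp: hone_def split: if_splits)
  then show "hmul f hone c = f c" by (simp add: hmul_def hone_def)
qed

lemma hseries_one: "hseries 1 = hone"
  by (rule ext) (simp add: hone_def lookup_one when_def)

lemma hseries_mult: "hseries (p * q) = hmul (hseries p) (hseries q)"
proof
  fix c
  let ?f = "hseries p" and ?g = "hseries q"
  let ?P = "{(a, b). ?f a \<noteq> 0 \<and> ?g b \<noteq> 0 \<and> a + b = c}"
  have "hseries (p * q) c = (\<Sum>(a, b). ?f a * ?g b when c = a + b)"
    unfolding lookup_mult by (rule prod_fun_unfold_prod[unfolded prod_fun_def]) simp_all
  also have "\<dots> = (\<Sum>x\<in>{x. (case x of (a, b) \<Rightarrow> ?f a * ?g b when c = a + b) \<noteq> 0}.
                     case x of (a, b) \<Rightarrow> ?f a * ?g b when c = a + b)"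
    by (rule Sum_any.expand_set)
  also have "{x. (case x of (a, b) \<Rightarrow> ?f a * ?g b when c = a + b) \<noteq> 0} = ?P"
    by (auto simp: when_def split: if_splits)
  also have "(\<Sum>x\<in>?P. case x of (a, b) \<Rightarrow> ?f a * ?g b when c = a + b) = hmul ?f ?g c"
    unfolding hmul_def by (rule sum.cong) (auto simp: when_def)
  finally show "hseries (p * q) c = hmul ?f ?g c" .
qed

lemma hseries_prod_list: "hseries (prod_list ps) = hprod_list (map hseries ps)"
  by (induction ps) (simp_all add: hseries_one hseries_mult)

lemma hdet_hseries: "hdet r (\<lambda>p q. hseries (N p q)) = hseries (det (mat r r (\<lambda>(p, q). N p q)))"
proof -
  have "(if evenperm \<sigma> then id else hneg) (hprod_list (map (\<lambda>p. hseries (N p (\<sigma> p))) [0..<r]))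
      = hseries (signof \<sigma> * (\<Prod>i = 0..<r. N i (\<sigma> i)))" for \<sigma>
  proof -
    have "hprod_list (map (\<lambda>p. hseries (N p (\<sigma> p))) [0..<r]) = hseries (\<Prod>i = 0..<r. N i (\<sigma> i))"
      using hseries_prod_list[of "map (\<lambda>p. N p (\<sigma> p)) [0..<r]"]
        prod.distinct_set_conv_list[OF distinct_upt, of "\<lambda>p. N p (\<sigma> p)" 0 r]
      by (simp add: o_def)
    then show ?thesis by (auto simp: sign_def hneg_def)
  qed
  then show ?thesis
    by (simp add: hdet_def hsum_def det_def lookup_sum lessThan_atLeast0 fun_eq_iff)
qed

definition has_hdeg :: "hahn \<Rightarrow> real \<Rightarrow> bool" where
  "has_hdeg f d \<longleftrightarrow> f d \<noteq> 0 \<and> (\<forall>a<d. f a = 0)"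

lemma hdeg_eqI: "has_hdeg f d \<Longrightarrow> hdeg f = d"
  unfolding has_hdeg_def hdeg_def by (rule Least_equality) (auto simp: not_less[symmetric])

lemma has_hdeg_hdeg:
  assumes "is_hahn f" "f \<noteq> hzero"
  shows "has_hdeg f (hdeg f)"
proof -
  have "hsupp f \<noteq> {}" using assms(2) by (auto simp: hsupp_def hzero_def)
  then obtain m where "m \<in> hsupp f" "\<forall>t\<in>hsupp f. m \<le> t"
    using assms(1) unfolding is_hahn_def by blast
  then have "has_hdeg f m" by (force simp: has_hdeg_def hsupp_def)
  then show ?thesis using hdeg_eqI by simp
qed

lemma has_hdeg_sym_lift:
  assumes "sym_lift n A M" "i < n" "j < n"
  shows "has_hdeg (M i j) (A i j)"
proof -
  have "is_hahn (M i j)" "M i j \<noteq> hzero" "hdeg (M i j) = A i j"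
    using assms unfolding sym_lift_def by auto
  then show ?thesis using has_hdeg_hdeg by metis
qed

lemma sym_liftI:
  assumes "\<And>i j. i < n \<Longrightarrow> j < n \<Longrightarrow> is_hahn (M i j) \<and> has_hdeg (M i j) (A i j) \<and> M i j = M j i"
  shows "sym_lift n A M"
proof -
  have "M i j \<noteq> hzero" if "has_hdeg (M i j) (A i j)" for i j
    using that by (auto simp: has_hdeg_def hzero_def)
  then show ?thesis unfolding sym_lift_def using assms hdeg_eqI by blast
qed

lemma hmul_eq_0_below:
  assumes "\<forall>a<d1. f a = 0" "\<forall>b<d2. g b = 0" "c < d1 + d2"
  shows "hmul f g c = 0"
proof -
  have pairs: "{(a, b). f a \<noteq> 0 \<and> g b \<noteq> 0 \<and> a + b = c} = {}"
    using assms by (auto simp: not_less[symmetric]) (smt (verit))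
  show ?thesis unfolding hmul_def pairs by simp
qed

lemma hmul_at_add:
  assumes "\<forall>a<d1. f a = 0" "\<forall>b<d2. g b = 0"
  shows "hmul f g (d1 + d2) = f d1 * g d2"
proof (cases "f d1 \<noteq> 0 \<and> g d2 \<noteq> 0")
  case True
  have pairs: "{(a, b). f a \<noteq> 0 \<and> g b \<noteq> 0 \<and> a + b = d1 + d2} = {(d1, d2)}"
    using assms True by (auto simp: not_less[symmetric]) (smt (verit))+
  show ?thesis unfolding hmul_def pairs by simp
next
  case False
  have pairs: "{(a, b). f a \<noteq> 0 \<and> g b \<noteq> 0 \<and> a + b = d1 + d2} = {}"
    using assms False by (auto simp: not_less[symmetric]) (smt (verit))+
  show ?thesis unfolding hmul_def pairs using False by auto
qed

lemma has_hdeg_hmul: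
  assumes "has_hdeg f d1" "has_hdeg g d2"
  shows "has_hdeg (hmul f g) (d1 + d2)"
proof -
  have f: "\<forall>a<d1. f a = 0" "f d1 \<noteq> 0" and g: "\<forall>b<d2. g b = 0" "g d2 \<noteq> 0"
    using assms by (auto simp: has_hdeg_def)
  show ?thesis
    unfolding has_hdeg_def hmul_at_add[OF f(1) g(1)] using f g hmul_eq_0_below[OF f(1) g(1)] by simp
qed

definition nonneg_exps :: "hpoly \<Rightarrow> bool" where
  "nonneg_exps p \<longleftrightarrow> (\<forall>a<0. hseries p a = 0)"

lemma nonneg_exps_add: "nonneg_exps p \<Longrightarrow> nonneg_exps q \<Longrightarrow> nonneg_exps (p + q)"
  by (simp add: nonneg_exps_def lookup_add)

lemma nonneg_exps_mult: "nonneg_exps p \<Longrightarrow> nonneg_exps q \<Longrightarrow> nonneg_exps (p * q)"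
  unfolding nonneg_exps_def hseries_mult using hmul_eq_0_below[of 0 "hseries p" 0 "hseries q"] by simp

lemma hseries_mult_at_0: "nonneg_exps p \<Longrightarrow> nonneg_exps q \<Longrightarrow> hseries (p * q) 0 = hseries p 0 * hseries q 0"
  unfolding nonneg_exps_def hseries_mult using hmul_at_add[of 0 "hseries p" 0 "hseries q"] by simp

lemma has_hdeg_0_iff: "has_hdeg (hseries p) 0 \<longleftrightarrow> nonneg_exps p \<and> hseries p 0 \<noteq> 0"
  by (auto simp: has_hdeg_def nonneg_exps_def)

section \<open>Rank of lifts\<close>

lemma permutes_lessThan_2: "{\<sigma>. \<sigma> permutes {..<2::nat}} = {id, Transposition.transpose 0 1}"
proof (intro Set.set_eqI iffI)
  fix \<sigma> :: "nat \<Rightarrow> nat" assume "\<sigma> \<in> {\<sigma>. \<sigma> permutes {..<2::nat}}"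
  then have p: "\<sigma> permutes {..<2}" by simp
  have out: "\<And>x. x \<ge> 2 \<Longrightarrow> \<sigma> x = x" using p by (auto simp: permutes_def)
  have s0: "\<sigma> 0 < 2" "\<sigma> 1 < 2" using permutes_in_image[OF p, of 0] permutes_in_image[OF p, of 1] by auto
  have inj: "\<sigma> 0 \<noteq> \<sigma> 1" using p by (metis permutes_inj injD zero_neq_one)
  show "\<sigma> \<in> {id, Transposition.transpose 0 1}"
  proof (cases "\<sigma> 0 = 0")
    case True
    then have "\<sigma> 1 = 1" using s0 inj by linarith
    then have "\<sigma> = id" using True out
      by (intro ext) (metis One_nat_def id_apply less_2_cases not_less)
    then show ?thesis by simp
  next
    case False
    then have "\<sigma> 0 = 1" "\<sigma> 1 = 0" using s0 inj by linarith+
    then have "\<sigma> = Transposition.transpose 0 1" using out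
      by (intro ext) (auto simp: Transposition.transpose_def)
    then show ?thesis by simp
  qed
next
  fix \<sigma> assume "\<sigma> \<in> {id, Transposition.transpose (0::nat) 1}"
  then show "\<sigma> \<in> {\<sigma>. \<sigma> permutes {..<2::nat}}"
    by (auto intro: permutes_id permutes_swap_id)
qed

lemma hdet_2: "hdet 2 N = (\<lambda>c. hmul (N 0 0) (N 1 1) c - hmul (N 0 1) (N 1 0) c)"
proof -
  have "id \<noteq> Transposition.transpose (0::nat) (Suc 0)"
    by (metis id_apply transpose_apply_first zero_neq_one One_nat_def)
  then show ?thesis
    unfolding hdet_def permutes_lessThan_2
    by (intro ext) (simp add: hsum_def evenperm_swap hmul_hone hneg_def numeral_2_eq_2 upt_rec
        transpose_apply_first transpose_apply_second)
qed

lemma hdet_0: "hdet 0 N = hone"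
  by (simp add: hdet_def hsum_def)

lemma finite_minor_sizes:
  fixes n :: nat and P :: "nat set \<Rightarrow> nat set \<Rightarrow> bool"
  shows "finite {r. \<exists>I J. I \<subseteq> {..<n} \<and> J \<subseteq> {..<n} \<and> card I = r \<and> card J = r \<and> P I J}"
  by (rule finite_subset[of _ "{..n}"]) (auto dest: card_mono[rotated, OF _ finite_lessThan])

lemma hrank_ge:
  assumes "I \<subseteq> {..<n}" "J \<subseteq> {..<n}" "card I = r" "card J = r" "hminor M I J \<noteq> hzero"
  shows "r \<le> hrank n M"
  unfolding hrank_def by (rule Max_ge[OF finite_minor_sizes]) (use assms in blast)

lemma hrank_le:
  assumes "\<And>I J. I \<subseteq> {..<n} \<Longrightarrow> J \<subseteq> {..<n} \<Longrightarrow> card I = card J \<Longrightarrow> hminor M I J \<noteq> hzero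
             \<Longrightarrow> card I \<le> r"
  shows "hrank n M \<le> r"
  unfolding hrank_def
proof (rule Max.boundedI[OF finite_minor_sizes])
  have "hminor M {} {} \<noteq> hzero"
    by (simp add: hminor_def hdet_0 hone_def hzero_def fun_eq_iff)
  then show "{r. \<exists>I J. I \<subseteq> {..<n} \<and> J \<subseteq> {..<n} \<and> card I = r \<and> card J = r \<and> hminor M I J \<noteq> hzero} \<noteq> {}"
    by blast
next
  fix s assume "s \<in> {r. \<exists>I J. I \<subseteq> {..<n} \<and> J \<subseteq> {..<n} \<and> card I = r \<and> card J = r \<and> hminor M I J \<noteq> hzero}"
  then obtain I J where "I \<subseteq> {..<n}" "J \<subseteq> {..<n}" "card I = s" "card J = s" "hminor M I J \<noteq> hzero"
    by blast
  then show "s \<le> r" using assms[of I J] by simp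
qed

lemma det_outer_sym_sum_eq_0:
  fixes U V :: "'b \<Rightarrow> 'a :: comm_ring_1"
  assumes r: "3 \<le> r"
  shows "det (mat r r (\<lambda>(p, q). U (f p) * V (g q) + V (f p) * U (g q))) = 0"
proof -
  define X where "X = mat r r (\<lambda>(p, m). if m = 0 then U (f p) else if m = 1 then V (f p) else 0)"
  define Y where "Y = mat r r (\<lambda>(m, q). if m = 0 then V (g q) else if m = 1 then U (g q) else 0)"
  have XY: "mat r r (\<lambda>(p, q). U (f p) * V (g q) + V (f p) * U (g q)) = X * Y"
  proof (rule eq_matI)
    fix p q assume "p < dim_row (X * Y)" "q < dim_col (X * Y)"
    then have p: "p < r" and q: "q < r" by (auto simp: X_def Y_def)
    have "(X * Y) $$ (p, q) = (\<Sum>m\<in>{0..<r}. X $$ (p, m) * Y $$ (m, q))"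
      using p q by (simp add: X_def Y_def scalar_prod_def)
    also have "\<dots> = (\<Sum>m\<in>{0..<2}. X $$ (p, m) * Y $$ (m, q))"
      using r p q by (intro sum.mono_neutral_right) (auto simp: X_def Y_def)
    also have "\<dots> = U (f p) * V (g q) + V (f p) * U (g q)"
      using r p q by (simp add: X_def Y_def numeral_2_eq_2)
    finally show "mat r r (\<lambda>(p, q). U (f p) * V (g q) + V (f p) * U (g q)) $$ (p, q) = (X * Y) $$ (p, q)"
      using p q by simp
  qed (auto simp: X_def Y_def)
  have "Y \<in> carrier_mat r r" by (simp add: Y_def)
  have "det Y = 0"
    unfolding det_def'[OF \<open>Y \<in> carrier_mat r r\<close>]
  proof (intro sum.neutral ballI)
    fix \<sigma> assume "\<sigma> \<in> {\<sigma>. \<sigma> permutes {0..<r}}"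
    then have "\<sigma> 2 < r" using r by (simp add: permutes_in_image)
    then have "(\<Prod>i = 0..<r. Y $$ (i, \<sigma> i)) = 0"
      using r by (intro prod_zero bexI[of _ 2]) (auto simp: Y_def)
    then show "signof \<sigma> * (\<Prod>i = 0..<r. Y $$ (i, \<sigma> i)) = 0" by simp
  qed
  moreover have "det (X * Y) = det X * det Y"
    by (rule det_mult[of _ r]) (simp_all add: X_def Y_def)
  ultimately show ?thesis unfolding XY by simp
qed

lemma hrank_outer_sym_sum_le_2: "hrank n (\<lambda>i j. hseries (U i * V j + V i * U j)) \<le> 2"
proof (rule hrank_le, rule ccontr)
  fix I J :: "nat set"
  let ?r = "card I" and ?i = "\<lambda>p. sorted_list_of_set I ! p" and ?j = "\<lambda>q. sorted_list_of_set J ! q"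
  assume "card I = card J" "\<not> card I \<le> 2"
    and minor: "hminor (\<lambda>i j. hseries (U i * V j + V i * U j)) I J \<noteq> hzero"
  then have "hminor (\<lambda>i j. hseries (U i * V j + V i * U j)) I J
      = hseries (det (mat ?r ?r (\<lambda>(p, q). U (?i p) * V (?j q) + V (?i p) * U (?j q))))"
    unfolding hminor_def hdet_hseries by simp
  also have "\<dots> = hzero"
    using \<open>\<not> card I \<le> 2\<close> by (simp add: det_outer_sym_sum_eq_0 hzero_def fun_eq_iff)
  finally show False using minor by contradiction
qed

lemma two_le_hrank_sym_lift:
  assumes M: "sym_lift n A M" and ik: "i < k" "k < n"
    and A: "0 < A i i" "A i k = 0" "A k k = 0"
  shows "2 \<le> hrank n M"
proof (rule hrank_ge)
  have deg: "has_hdeg (M i i) (A i i)" "has_hdeg (M k k) 0" "has_hdeg (M i k) 0"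
    using has_hdeg_sym_lift[OF M, of i i] has_hdeg_sym_lift[OF M, of k k]
      has_hdeg_sym_lift[OF M, of i k] ik A by auto
  have "M k i = M i k" using M ik unfolding sym_lift_def by auto
  \<comment> \<open>The constant term of the minor is \<open>-(M i k 0)\<^sup>2\<close>, as \<open>M i i * M k k\<close> has positive degree.\<close>
  have "hmul (M i i) (M k k) 0 = 0"
    using has_hdeg_hmul[OF deg(1,2)] A(1) by (simp add: has_hdeg_def)
  moreover have "hmul (M i k) (M k i) 0 \<noteq> 0"
    using has_hdeg_hmul[OF deg(3,3)] \<open>M k i = M i k\<close> by (simp add: has_hdeg_def)
  moreover have "card {i, k} = 2" "sorted_list_of_set {i, k} = [i, k]" using ik by simp_all
  ultimately have "hminor M {i, k} {i, k} 0 \<noteq> 0"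
    unfolding hminor_def by (simp add: hdet_2)
  then show "hminor M {i, k} {i, k} \<noteq> hzero" by (auto simp: hzero_def)
qed (use ik in auto)

lemma sym_kapranov_rank_eqI:
  assumes "sym_lift n A M" "hrank n M = r" "\<And>M. sym_lift n A M \<Longrightarrow> r \<le> hrank n M"
  shows "sym_kapranov_rank n A = r"
  unfolding sym_kapranov_rank_def using assms by (intro Least_equality) auto

section \<open>Nonsingular 3 x 3 submatrices\<close>

lemma sym_tropical_rank_ge:
  assumes "I \<subseteq> {..<n}" "J \<subseteq> {..<n}" "card I = r" "card J = r" "\<not> sym_trop_singular A I J"
  shows "r \<le> sym_tropical_rank n A"
  unfolding sym_tropical_rank_def by (rule Max_ge[OF finite_minor_sizes]) (use assms in blast)

lemma sym_trop_singular_if_sym_tropical_rank_less: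
  assumes "sym_tropical_rank n A < r" "I \<subseteq> {..<n}" "J \<subseteq> {..<n}" "card I = r" "card J = r"
  shows "sym_trop_singular A I J"
  using sym_tropical_rank_ge[OF assms(2-5)] assms(1) by (meson leD)

lemma trop_value_cong: "(\<And>x. x \<in> I \<Longrightarrow> \<rho> x = \<rho>' x) \<Longrightarrow> trop_value A I \<rho> = trop_value A I \<rho>'"
  by (simp add: trop_value_def)

lemma sym_monomial_cong: "(\<And>x. x \<in> I \<Longrightarrow> \<rho> x = \<rho>' x) \<Longrightarrow> sym_monomial I \<rho> = sym_monomial I \<rho>'"
  unfolding sym_monomial_def by (cases "finite I") (auto intro: image_mset_cong)

lemma finite_trop_values:
  assumes "finite I" "finite J"
  shows "finite {trop_value A I \<rho> |\<rho>. bij_betw \<rho> I J}"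
proof (rule finite_subset)
  show "{trop_value A I \<rho> |\<rho>. bij_betw \<rho> I J} \<subseteq> trop_value A I ` (I \<rightarrow>\<^sub>E J)"
  proof
    fix x assume "x \<in> {trop_value A I \<rho> |\<rho>. bij_betw \<rho> I J}"
    then obtain \<rho> where \<rho>: "bij_betw \<rho> I J" "x = trop_value A I \<rho>" by blast
    then have "restrict \<rho> I \<in> I \<rightarrow>\<^sub>E J" "x = trop_value A I (restrict \<rho> I)"
      by (auto simp: bij_betw_def intro: trop_value_cong)
    then show "x \<in> trop_value A I ` (I \<rightarrow>\<^sub>E J)" by blast
  qed
  show "finite (trop_value A I ` (I \<rightarrow>\<^sub>E J))" using assms by (simp add: finite_PiE)
qed

lemma not_sym_trop_singularI:
  assumes "finite I" "finite J" "bij_betw \<rho>\<^sub>0 I J"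
    and min: "\<And>\<rho>. bij_betw \<rho> I J \<Longrightarrow> trop_value A I \<rho>\<^sub>0 \<le> trop_value A I \<rho>"
    and unique: "\<And>\<rho>. bij_betw \<rho> I J \<Longrightarrow> trop_value A I \<rho> = trop_value A I \<rho>\<^sub>0
                   \<Longrightarrow> sym_monomial I \<rho> = sym_monomial I \<rho>\<^sub>0"
  shows "\<not> sym_trop_singular A I J"
proof -
  have "Min {trop_value A I \<rho> |\<rho>. bij_betw \<rho> I J} = trop_value A I \<rho>\<^sub>0"
    by (rule Min_eqI) (use finite_trop_values[OF assms(1,2)] assms(3) min in auto)
  then show ?thesis unfolding sym_trop_singular_def Let_def using unique by metis
qed

lemma bij_betw_three_cases:
  assumes "bij_betw \<rho> {a, c, k} {x, y, z}" "distinct [a, c, k]" "distinct [x, y, z]"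
  obtains "\<rho> a = x" "\<rho> c = y" "\<rho> k = z" | "\<rho> a = x" "\<rho> c = z" "\<rho> k = y"
    | "\<rho> a = y" "\<rho> c = x" "\<rho> k = z" | "\<rho> a = y" "\<rho> c = z" "\<rho> k = x"
    | "\<rho> a = z" "\<rho> c = x" "\<rho> k = y" | "\<rho> a = z" "\<rho> c = y" "\<rho> k = x"
proof -
  have "\<rho> a \<in> {x, y, z}" "\<rho> c \<in> {x, y, z}" "\<rho> k \<in> {x, y, z}" "distinct [\<rho> a, \<rho> c, \<rho> k]"
    using assms(1,2) by (auto simp: bij_betw_def inj_on_def)
  then show ?thesis using that assms(3) by auto
qed

lemma trop_value_three:
  "distinct [a, c, k] \<Longrightarrow> trop_value A {a, c, k} \<rho> = A a (\<rho> a) + A c (\<rho> c) + A k (\<rho> k)"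
  by (simp add: trop_value_def)

lemma not_sym_trop_singular_four_point:
  fixes A :: "nat \<Rightarrow> nat \<Rightarrow> real"
  assumes distinct: "a \<noteq> c" "b \<noteq> d" "k \<notin> {a, b, c, d}"
    and zero: "A a k = 0" "A c k = 0" "A k b = 0" "A k d = 0" "A k k = 0"
    and "0 < A a d" "A a d < A a b" "A a d < A c b" "A a d < A c d"
  shows "\<not> sym_trop_singular A {a, c, k} {b, d, k}"
proof -
  define \<rho>\<^sub>0 where "\<rho>\<^sub>0 = (\<lambda>x. if x = a then d else if x = c then k else b)"
  have rows: "distinct [a, c, k]" and cols: "distinct [b, d, k]" using distinct by auto
  have bij_0: "bij_betw \<rho>\<^sub>0 {a, c, k} {b, d, k}"
    unfolding bij_betw_def inj_on_def \<rho>\<^sub>0_def using distinct by auto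
  have value_0: "trop_value A {a, c, k} \<rho>\<^sub>0 = A a d"
    using rows zero by (simp add: trop_value_three \<rho>\<^sub>0_def)
  have minimal: "A a d \<le> trop_value A {a, c, k} \<rho> \<and>
      (trop_value A {a, c, k} \<rho> = A a d \<longrightarrow> sym_monomial {a, c, k} \<rho> = sym_monomial {a, c, k} \<rho>\<^sub>0)"
    if "bij_betw \<rho> {a, c, k} {b, d, k}" for \<rho>
    using that rows cols
  proof (cases rule: bij_betw_three_cases)
    case 4
    then have "sym_monomial {a, c, k} \<rho> = sym_monomial {a, c, k} \<rho>\<^sub>0"
      by (intro sym_monomial_cong) (auto simp: \<rho>\<^sub>0_def)
    then show ?thesis using 4 zero by (simp add: trop_value_three[OF rows])
  qed (use assms in \<open>auto simp: trop_value_three[OF rows]\<close>)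
  show ?thesis by (rule not_sym_trop_singularI[OF _ _ bij_0]) (simp_all add: value_0 minimal)
qed

lemma not_sym_trop_singular_three_point:
  fixes A :: "nat \<Rightarrow> nat \<Rightarrow> real"
  assumes distinct: "i \<noteq> j" "k \<notin> {i, j}"
    and zero: "A i k = 0" "A k i = 0" "A j k = 0" "A k j = 0" "A k k = 0"
    and "A i j = A j i" "0 < A i j" "A i j < A i i" "A i j < A j j"
  shows "\<not> sym_trop_singular A {i, j, k} {i, j, k}"
proof -
  \<comment> \<open>Both 3-cycles on \<open>i, j, k\<close> attain the minimum \<open>A i j\<close>, but they give the same monomial.\<close>
  define \<rho>\<^sub>0 where "\<rho>\<^sub>0 = (\<lambda>x. if x = i then j else if x = j then k else i)"
  define \<rho>\<^sub>1 where "\<rho>\<^sub>1 = (\<lambda>x. if x = i then k else if x = j then i else j)"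
  have rows: "distinct [i, j, k]" using distinct by auto
  have same: "sym_monomial {i, j, k} \<rho>\<^sub>1 = sym_monomial {i, j, k} \<rho>\<^sub>0"
    using distinct by (simp add: sym_monomial_def \<rho>\<^sub>0_def \<rho>\<^sub>1_def insert_commute)
  have bij_0: "bij_betw \<rho>\<^sub>0 {i, j, k} {i, j, k}"
    unfolding bij_betw_def inj_on_def \<rho>\<^sub>0_def using distinct by auto
  have value_0: "trop_value A {i, j, k} \<rho>\<^sub>0 = A i j"
    using rows zero by (simp add: trop_value_three \<rho>\<^sub>0_def)
  have minimal: "A i j \<le> trop_value A {i, j, k} \<rho> \<and>
      (trop_value A {i, j, k} \<rho> = A i j \<longrightarrow> sym_monomial {i, j, k} \<rho> = sym_monomial {i, j, k} \<rho>\<^sub>0)"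
    if "bij_betw \<rho> {i, j, k} {i, j, k}" for \<rho>
    using that rows rows
  proof (cases rule: bij_betw_three_cases)
    case 5
    then have "sym_monomial {i, j, k} \<rho> = sym_monomial {i, j, k} \<rho>\<^sub>1"
      by (intro sym_monomial_cong) (auto simp: \<rho>\<^sub>1_def)
    then show ?thesis using 5 assms by (simp add: trop_value_three[OF rows] same)
  qed (use assms in \<open>auto simp: trop_value_three[OF rows] \<rho>\<^sub>0_def intro!: sym_monomial_cong\<close>)
  show ?thesis by (rule not_sym_trop_singularI[OF _ _ bij_0]) (simp_all add: value_0 minimal)
qed

section \<open>Entries as degrees of pairwise sums\<close>

lemma signed_Suc_add_eq_0_iff:
  "(if s then 1 else -1) * of_nat (Suc a) + (if t then 1 else -1) * of_nat (Suc b) = (0::complex)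
     \<longleftrightarrow> s \<noteq> t \<and> a = b"
proof -
  have "of_nat (Suc a) + of_nat (Suc b) \<noteq> (0::complex)"
    by (metis of_nat_add of_nat_eq_0_iff add_is_0 nat.distinct(1))
  then show ?thesis
    by (cases s; cases t)
      (auto simp del: of_nat_Suc simp: add_eq_0_iff2 add.commute minus_equation_iff[of "of_nat (Suc a)"])
qed

locale tropical_sum_matrix =
  fixes D :: "nat set" and B :: "nat \<Rightarrow> nat \<Rightarrow> real"
  assumes finite_D: "finite D"
    and sym: "\<And>i j. i \<in> D \<Longrightarrow> j \<in> D \<Longrightarrow> B i j = B j i"
    and pos: "\<And>i j. i \<in> D \<Longrightarrow> j \<in> D \<Longrightarrow> 0 < B i j"
    and four_point: "\<And>a b c d. a \<in> D \<Longrightarrow> b \<in> D \<Longrightarrow> c \<in> D \<Longrightarrow> d \<in> D \<Longrightarrow> a \<noteq> c \<Longrightarrow> b \<noteq> d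
                       \<Longrightarrow> \<not> (B a d < B a b \<and> B a d < B c b \<and> B a d < B c d)"
    and three_point: "\<And>i j. i \<in> D \<Longrightarrow> j \<in> D \<Longrightarrow> i \<noteq> j \<Longrightarrow> \<not> (B i j < B i i \<and> B i j < B j j)"
begin

lemma above_path:
  assumes "a \<in> D" "b \<in> D" "c \<in> D" "d \<in> D" "v < B a b" "v < B b c" "v < B c d"
  shows "v < B a d"
proof (cases "a = c \<or> b = d")
  case True
  then show ?thesis using assms by auto
next
  case False
  show ?thesis
  proof (rule ccontr)
    assume "\<not> v < B a d"
    then have "B a d < B a b \<and> B a d < B c b \<and> B a d < B c d"
      using assms sym[of b c] by auto
    then show False using four_point[of a b c d] assms False by auto
  qed
qed

definition nbhd :: "real \<Rightarrow> nat \<Rightarrow> nat set" where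
  "nbhd v i = {q \<in> D. v < B i q}"

definition twins :: "real \<Rightarrow> nat \<Rightarrow> nat set" where
  "twins v i = {p \<in> D. nbhd v p = nbhd v i}"

lemma finite_nbhd: "finite (nbhd v i)" and finite_twins: "finite (twins v i)"
  using finite_D by (simp_all add: nbhd_def twins_def)

lemma nbhd_eq_twins:
  assumes i: "i \<in> D" and j: "j \<in> D" and ij: "v < B i j"
  shows "nbhd v j = twins v i"
proof (intro Set.set_eqI iffI)
  fix p assume "p \<in> nbhd v j"
  then have p: "p \<in> D" "v < B j p" by (auto simp: nbhd_def)
  have "v < B i q \<longleftrightarrow> v < B p q" if "q \<in> D" for q
  proof
    assume "v < B i q"
    then show "v < B p q" using above_path[of p j i q v] i j p ij that sym[of p j] sym[of j i] by simp
  next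
    assume "v < B p q"
    then show "v < B i q" using above_path[of i j p q v] i j p ij that by blast
  qed
  then have "nbhd v p = nbhd v i" by (auto simp: nbhd_def)
  then show "p \<in> twins v i" using p by (auto simp: twins_def)
next
  fix p assume "p \<in> twins v i"
  then have p: "p \<in> D" "nbhd v p = nbhd v i" by (auto simp: twins_def)
  then have "j \<in> nbhd v p" using j ij by (auto simp: nbhd_def)
  then show "p \<in> nbhd v j" using p sym[of p j] j by (auto simp: nbhd_def)
qed

text \<open>
  For fixed v, a neighbour of i in the graph of pairs with v < B i j has the twin class of i as
  its neighbourhood (\<open>nbhd_eq_twins\<close>). A vertex i without loop gets a coefficient
  whose modulus encodes the unordered pair of its twin class and its neighbourhood and whose sign
  encodes their order, so the coefficients of i and j cancel exactly when v < B i j.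
\<close>
definition level_coeff :: "real \<Rightarrow> nat \<Rightarrow> complex" where
  "level_coeff v i =
     (if v < B i i then 0
      else (if set_encode (twins v i) < set_encode (nbhd v i) then 1 else -1)
           * of_nat (Suc (set_encode (twins v i \<union> nbhd v i))))"

lemma level_coeff_cancel:
  assumes i: "i \<in> D" and j: "j \<in> D" and ij: "v < B i j"
  shows "level_coeff v i + level_coeff v j = 0"
proof (cases "v < B i i")
  case True
  then have "v < B j j" using above_path[of j i i j] i j ij sym[of i j] by auto
  then show ?thesis using True by (simp add: level_coeff_def)
next
  case False
  then have "\<not> v < B j j" using above_path[of i j j i] i j ij sym[of i j] by auto
  moreover have "nbhd v j = twins v i" "twins v j = nbhd v i"
    using nbhd_eq_twins[OF i j ij] nbhd_eq_twins[OF j i] ij sym[OF i j] by auto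
  moreover have "twins v i \<noteq> nbhd v i" using i False by (auto simp: twins_def nbhd_def)
  then have "set_encode (twins v i) \<noteq> set_encode (nbhd v i)"
    using finite_nbhd finite_twins set_encode_eq by metis
  then have "set_encode (twins v i) < set_encode (nbhd v i)
      \<longleftrightarrow> \<not> set_encode (nbhd v i) < set_encode (twins v i)"
    by auto
  ultimately show ?thesis
    using False by (simp add: level_coeff_def signed_Suc_add_eq_0_iff Un_commute del: of_nat_Suc)
qed

lemma level_coeff_no_cancel:
  assumes i: "i \<in> D" and j: "j \<in> D" and ij: "B i j = v"
  shows "level_coeff v i + level_coeff v j \<noteq> 0"
proof (cases "v < B i i \<or> v < B j j")
  case True
  have "\<not> (v < B i i \<and> v < B j j)" using three_point[OF i j] ij by (cases "i = j") auto
  then show ?thesis using True by (auto simp: level_coeff_def simp del: of_nat_Suc)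
next
  case False
  let ?s = "\<lambda>x. set_encode (twins v x) < set_encode (nbhd v x)"
  show ?thesis
  proof
    assume "level_coeff v i + level_coeff v j = 0"
    then have "set_encode (twins v i \<union> nbhd v i) = set_encode (twins v j \<union> nbhd v j)"
      and "?s i \<noteq> ?s j"
      using False by (simp_all add: level_coeff_def signed_Suc_add_eq_0_iff del: of_nat_Suc)
    then have "twins v i \<union> nbhd v i = twins v j \<union> nbhd v j"
      by (simp add: set_encode_eq finite_nbhd finite_twins)
    moreover have "j \<in> twins v j" "j \<notin> nbhd v i" using j ij by (auto simp: twins_def nbhd_def)
    ultimately have "j \<in> twins v i" by blast
    then have "nbhd v j = nbhd v i" by (simp add: twins_def)
    then have "?s i = ?s j" by (simp add: twins_def)
    with \<open>?s i \<noteq> ?s j\<close> show False ..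
  qed
qed

definition level_series :: "nat \<Rightarrow> hpoly" where
  "level_series i = Abs_poly_mapping (\<lambda>v. if v \<in> case_prod B ` (D \<times> D) then level_coeff v i else 0)"

lemma hseries_level_series:
  "hseries (level_series i) = (\<lambda>v. if v \<in> case_prod B ` (D \<times> D) then level_coeff v i else 0)"
proof -
  have "finite {v. (if v \<in> case_prod B ` (D \<times> D) then level_coeff v i else 0) \<noteq> 0}"
    by (rule finite_subset[of _ "case_prod B ` (D \<times> D)"]) (auto simp: finite_D)
  then show ?thesis unfolding level_series_def by simp
qed

lemma level_series_pos_exps:
  assumes "a \<le> 0"
  shows "hseries (level_series i) a = 0"
proof -
  have "a \<notin> case_prod B ` (D \<times> D)"
  proof
    assume "a \<in> case_prod B ` (D \<times> D)"
    then obtain p q where "p \<in> D" "q \<in> D" "a = B p q" by auto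
    then show False using pos[of p q] assms by simp
  qed
  then show ?thesis by (simp add: hseries_level_series)
qed

lemma has_hdeg_level_series_add:
  assumes "i \<in> D" "j \<in> D"
  shows "has_hdeg (hseries (level_series i + level_series j)) (B i j)"
proof -
  have "B i j \<in> case_prod B ` (D \<times> D)" using assms by force
  then have "hseries (level_series i + level_series j) (B i j) \<noteq> 0"
    using level_coeff_no_cancel[OF assms refl] by (simp add: lookup_add hseries_level_series)
  moreover have "hseries (level_series i + level_series j) a = 0" if "a < B i j" for a
    using level_coeff_cancel[OF assms that] by (simp add: lookup_add hseries_level_series)
  ultimately show ?thesis by (simp add: has_hdeg_def)
qed

end

lemma tropical_sum_matrix_if_sym_tropical_rank_le_2:
  fixes A B :: "nat \<Rightarrow> nat \<Rightarrow> real" and e :: "nat \<Rightarrow> nat"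
  assumes "finite D" and e: "inj_on e D" "k \<notin> e ` D" "insert k (e ` D) \<subseteq> {..<n}"
    and B: "\<And>i j. i \<in> D \<Longrightarrow> j \<in> D \<Longrightarrow> B i j = B j i \<and> 0 < B i j"
    and A: "\<And>i j. i \<in> D \<Longrightarrow> j \<in> D \<Longrightarrow> A (e i) (e j) = B i j"
    and zero: "\<And>x. A x k = 0" "\<And>x. A k x = 0"
    and rank: "sym_tropical_rank n A \<le> 2"
  shows "tropical_sum_matrix D B"
proof
  fix a b c d assume D: "a \<in> D" "b \<in> D" "c \<in> D" "d \<in> D" and "a \<noteq> c" "b \<noteq> d"
  then have distinct: "e a \<noteq> e c" "e b \<noteq> e d" "k \<notin> {e a, e b, e c, e d}"
    using e by (auto simp: inj_on_eq_iff)
  show "\<not> (B a d < B a b \<and> B a d < B c b \<and> B a d < B c d)"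
  proof
    assume "B a d < B a b \<and> B a d < B c b \<and> B a d < B c d"
    then have "\<not> sym_trop_singular A {e a, e c, k} {e b, e d, k}"
      using B[of a d] distinct by (intro not_sym_trop_singular_four_point) (simp_all add: zero A D)
    moreover have "sym_trop_singular A {e a, e c, k} {e b, e d, k}"
      using distinct D e rank
      by (intro sym_trop_singular_if_sym_tropical_rank_less[where r = 3 and n = n]) auto
    ultimately show False by contradiction
  qed
next
  fix i j assume D: "i \<in> D" "j \<in> D" and "i \<noteq> j"
  then have distinct: "e i \<noteq> e j" "k \<notin> {e i, e j}"
    using e by (auto simp: inj_on_eq_iff)
  show "\<not> (B i j < B i i \<and> B i j < B j j)"
  proof
    assume "B i j < B i i \<and> B i j < B j j"
    then have "\<not> sym_trop_singular A {e i, e j, k} {e i, e j, k}"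
      using B[of i j] distinct by (intro not_sym_trop_singular_three_point) (simp_all add: zero A D)
    moreover have "sym_trop_singular A {e i, e j, k} {e i, e j, k}"
      using distinct D e rank
      by (intro sym_trop_singular_if_sym_tropical_rank_less[where r = 3 and n = n]) auto
    ultimately show False by contradiction
  qed
qed (use assms in auto)

section \<open>The lift of the block matrix\<close>

text \<open>
  The lift is U V^T + V U^T with U = (1, ..., 1, w2) (k + 1 ones) and V = (w1, 1, ..., 1):
  on the two blocks its entries are w1 i + w1 j and w2 i + w2 j, elsewhere their constant term
  is nonzero.
\<close>
definition block_u :: "nat \<Rightarrow> (nat \<Rightarrow> hpoly) \<Rightarrow> nat \<Rightarrow> hpoly" where
  "block_u k w\<^sub>2 i = (if i \<le> k then 1 else w\<^sub>2 (i - k - 1))"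

definition block_v :: "nat \<Rightarrow> (nat \<Rightarrow> hpoly) \<Rightarrow> nat \<Rightarrow> hpoly" where
  "block_v k w\<^sub>1 i = (if i < k then w\<^sub>1 i else 1)"

definition block_lift :: "nat \<Rightarrow> (nat \<Rightarrow> hpoly) \<Rightarrow> (nat \<Rightarrow> hpoly) \<Rightarrow> nat \<Rightarrow> nat \<Rightarrow> hpoly" where
  "block_lift k w\<^sub>1 w\<^sub>2 i j = block_u k w\<^sub>2 i * block_v k w\<^sub>1 j + block_v k w\<^sub>1 i * block_u k w\<^sub>2 j"

lemma has_hdeg_block_lift:
  assumes pos\<^sub>1: "\<And>i a. a \<le> 0 \<Longrightarrow> hseries (w\<^sub>1 i) a = 0"
    and pos\<^sub>2: "\<And>i a. a \<le> 0 \<Longrightarrow> hseries (w\<^sub>2 i) a = 0"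
    and deg\<^sub>1: "\<And>i j. i < k \<Longrightarrow> j < k \<Longrightarrow> has_hdeg (hseries (w\<^sub>1 i + w\<^sub>1 j)) (B\<^sub>1 i j)"
    and deg\<^sub>2: "\<And>i j. i < l \<Longrightarrow> j < l \<Longrightarrow> has_hdeg (hseries (w\<^sub>2 i + w\<^sub>2 j)) (B\<^sub>2 i j)"
    and ij: "i < k + 1 + l" "j < k + 1 + l"
  shows "has_hdeg (hseries (block_lift k w\<^sub>1 w\<^sub>2 i j)) (block_matrix k B\<^sub>1 B\<^sub>2 i j)"
proof -
  consider "i < k \<and> j < k" | "k < i \<and> k < j" | "\<not> (i < k \<and> j < k)" "\<not> (k < i \<and> k < j)"
    by blast
  then show ?thesis
  proof cases
    case 1
    then show ?thesis
      using deg\<^sub>1[of i j] by (simp add: block_lift_def block_u_def block_v_def block_matrix_def add.commute)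
  next
    case 2
    then have "i - k - 1 < l" "j - k - 1 < l" using ij by auto
    then show ?thesis
      using deg\<^sub>2 2 by (simp add: block_lift_def block_u_def block_v_def block_matrix_def)
  next
    case 3
    have "nonneg_exps (w\<^sub>1 x)" "nonneg_exps (w\<^sub>2 x)" "hseries (w\<^sub>1 x) 0 = 0" "hseries (w\<^sub>2 x) 0 = 0" for x
      using pos\<^sub>1 pos\<^sub>2 by (simp_all add: nonneg_exps_def)
    then have u: "nonneg_exps (block_u k w\<^sub>2 x)" "hseries (block_u k w\<^sub>2 x) 0 = (if x \<le> k then 1 else 0)"
      and v: "nonneg_exps (block_v k w\<^sub>1 x)" "hseries (block_v k w\<^sub>1 x) 0 = (if x < k then 0 else 1)" for x
      by (simp_all add: block_u_def block_v_def nonneg_exps_def lookup_one)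
    have "nonneg_exps (block_lift k w\<^sub>1 w\<^sub>2 i j)"
      unfolding block_lift_def by (intro nonneg_exps_add nonneg_exps_mult u v)
    moreover have "hseries (block_lift k w\<^sub>1 w\<^sub>2 i j) 0 \<noteq> 0"
      using 3 by (auto simp: block_lift_def lookup_add hseries_mult_at_0 u v)
    moreover have "block_matrix k B\<^sub>1 B\<^sub>2 i j = 0"
      using 3 by (auto simp: block_matrix_def)
    ultimately show ?thesis by (simp add: has_hdeg_0_iff)
  qed
qed

lemma sym_lift_block_lift:
  assumes "\<And>i a. a \<le> 0 \<Longrightarrow> hseries (w\<^sub>1 i) a = 0" "\<And>i a. a \<le> 0 \<Longrightarrow> hseries (w\<^sub>2 i) a = 0"
    and "\<And>i j. i < k \<Longrightarrow> j < k \<Longrightarrow> has_hdeg (hseries (w\<^sub>1 i + w\<^sub>1 j)) (B\<^sub>1 i j)"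
    and "\<And>i j. i < l \<Longrightarrow> j < l \<Longrightarrow> has_hdeg (hseries (w\<^sub>2 i + w\<^sub>2 j)) (B\<^sub>2 i j)"
  shows "sym_lift (k + 1 + l) (block_matrix k B\<^sub>1 B\<^sub>2) (\<lambda>i j. hseries (block_lift k w\<^sub>1 w\<^sub>2 i j))"
proof (rule sym_liftI)
  fix i j assume "i < k + 1 + l" "j < k + 1 + l"
  then show "is_hahn (hseries (block_lift k w\<^sub>1 w\<^sub>2 i j))
      \<and> has_hdeg (hseries (block_lift k w\<^sub>1 w\<^sub>2 i j)) (block_matrix k B\<^sub>1 B\<^sub>2 i j)
      \<and> hseries (block_lift k w\<^sub>1 w\<^sub>2 i j) = hseries (block_lift k w\<^sub>1 w\<^sub>2 j i)"
    using has_hdeg_block_lift[OF assms] by (simp add: is_hahn_hseries block_lift_def ac_simps)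
qed

theorem lemma2:
  fixes k l :: nat and B1 B2 :: "nat \<Rightarrow> nat \<Rightarrow> real"
  assumes "k \<ge> 1" and "l \<ge> 1"
    and "\<forall>i<k. \<forall>j<k. B1 i j = B1 j i \<and> B1 i j > 0"
    and "\<forall>i<l. \<forall>j<l. B2 i j = B2 j i \<and> B2 i j > 0"
    and "sym_tropical_rank (k + 1 + l) (block_matrix k B1 B2) = 2"
  shows "sym_kapranov_rank (k + 1 + l) (block_matrix k B1 B2) = 2"
proof -
  let ?n = "k + 1 + l" and ?A = "block_matrix k B1 B2"
  have zero: "\<And>x. ?A x k = 0" "\<And>x. ?A k x = 0" by (simp_all add: block_matrix_def)
  interpret W\<^sub>1: tropical_sum_matrix "{..<k}" B1
    by (rule tropical_sum_matrix_if_sym_tropical_rank_le_2[where e = id and A = ?A and n = ?n,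
          OF _ _ _ _ _ _ zero])
      (use assms in \<open>auto simp: block_matrix_def\<close>)
  interpret W\<^sub>2: tropical_sum_matrix "{..<l}" B2
    by (rule tropical_sum_matrix_if_sym_tropical_rank_le_2[where e = "\<lambda>i. k + 1 + i" and A = ?A and n = ?n,
          OF _ _ _ _ _ _ zero])
      (use assms in \<open>auto simp: block_matrix_def inj_on_def\<close>)
  let ?M = "\<lambda>i j. hseries (block_lift k W\<^sub>1.level_series W\<^sub>2.level_series i j)"
  have lift: "sym_lift ?n ?A ?M"
    by (rule sym_lift_block_lift)
      (simp_all add: W\<^sub>1.level_series_pos_exps W\<^sub>2.level_series_pos_exps
        W\<^sub>1.has_hdeg_level_series_add W\<^sub>2.has_hdeg_level_series_add)
  have lower: "2 \<le> hrank ?n M" if "sym_lift ?n ?A M" for M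
    using two_le_hrank_sym_lift[OF that, of 0 k] assms(1,3) by (simp add: block_matrix_def)
  have "hrank ?n ?M \<le> 2"
    unfolding block_lift_def by (rule hrank_outer_sym_sum_le_2)
  then show ?thesis
    using lower[OF lift] by (intro sym_kapranov_rank_eqI[OF lift _ lower]) simp
qed

end
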